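(* Consider the class of three-valued logics (as defined in the context) that are paraconsistent and have properties (a) and (b). There are exactly 16 logics in this class whose logical equivalence relation $\equiv$ satisfies, for all formulas $A,B$, all of the following: (1) $A\wedge\bot \equiv \bot$; (2) $A\vee\top\equiv\top$; (3) $A\wedge\top\equiv A$; (4) $A\vee\bot\equiv A$; (5) $A\wedge A\equiv A$; (6) $A\vee A\equiv A$; (7) $A\wedge B\equiv B\wedge A$; (8) $A\vee B\equiv B\vee A$; (9) $\neg\neg A\equiv A$.
   Context: Formulas are built from a countably infinite set of propositional variables, the constant $\bot$, the unary connective $\neg$ and the binary connectives $\wedge,\vee,\to$; $\top$ abbreviates $\neg\bot$. Let $V=\{t,f,b\}$. A three-valued logic is specified by truth functions $\neg^M:V\to V$ and $\wedge^M,\vee^M,\to^M:V^2\to V$ that agree with the classical truth functions of negation, conjunction, disjunction and material implication on $\{t,f\}$, with $\bot$ interpreted as $f$; two logics are different iff at least one of these truth functions differs. A valuation is a map $\nu$ from formulas to $V$ with $\nu(\bot)=f$, $\nu(\neg A)=\neg^M(\nu(A))$, $\nu(A\wedge B)=\wedge^M(\nu(A),\nu(B))$, and similarly for $\vee,\to$ (values on propositional variables are arbitrary). The designated values are $t$ and $b$: $\Gamma\models A$ iff for every valuation $\nu$, either $\nu(A')=f$ for some $A'\in\Gamma$ or $\nu(A)\in\{t,b\}$. The logic is paraconsistent if there are formulas $A,B$ with $\{A,\neg A\}\not\models B$. Its logical equivalence relation is: $A\equiv B$ iff $\nu(A)=\nu(B)$ for every valuation $\nu$. Property (a): for every set of formulas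 $\Gamma$ and formula $A$, $\Gamma\models A$ implies $\Gamma\models_{\mathrm{CPL}}A$, where $\models_{\mathrm{CPL}}$ is the consequence relation of classical propositional logic (with $\bot$ false, $\to$ material implication). Property (b): for all sets $\Gamma$ and formulas $A,B,C$: (b1) $\Gamma\cup\{A\}\models B$ iff $\Gamma\models A\to B$; (b2) $\Gamma\models A\wedge B$ iff $\Gamma\models A$ and $\Gamma\models B$; (b3) $\Gamma\cup\{A\vee B\}\models C$ iff $\Gamma\cup\{A\}\models C$ and $\Gamma\cup\{B\}\models C$. *)

theory Defs
  imports Main
begin

datatype V = t | f | b

datatype form = Var nat | Bot | Neg form | Conj form form | Disj form form | Imp form form

definition Top :: form where "Top = Neg Bot"

text \<open>A three-valued logic: truth functions (negation, conjunction, disjunction, implication).\<close>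
type_synonym logic = "(V \<Rightarrow> V) \<times> (V \<Rightarrow> V \<Rightarrow> V) \<times> (V \<Rightarrow> V \<Rightarrow> V) \<times> (V \<Rightarrow> V \<Rightarrow> V)"

definition classical_agree :: "logic \<Rightarrow> bool" where
  "classical_agree L = (case L of (ng, cj, dj, im) \<Rightarrow>
     ng t = f \<and> ng f = t \<and>
     cj t t = t \<and> cj t f = f \<and> cj f t = f \<and> cj f f = f \<and>
     dj t t = t \<and> dj t f = t \<and> dj f t = t \<and> dj f f = f \<and>
     im t t = t \<and> im t f = f \<and> im f t = t \<and> im f f = t)"

definition valuation :: "logic \<Rightarrow> (form \<Rightarrow> V) \<Rightarrow> bool" where
  "valuation L \<nu> = (case L of (ng, cj, dj, im) \<Rightarrow>
     \<nu> Bot = f \<and>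
     (\<forall>A. \<nu> (Neg A) = ng (\<nu> A)) \<and>
     (\<forall>A B. \<nu> (Conj A B) = cj (\<nu> A) (\<nu> B)) \<and>
     (\<forall>A B. \<nu> (Disj A B) = dj (\<nu> A) (\<nu> B)) \<and>
     (\<forall>A B. \<nu> (Imp A B) = im (\<nu> A) (\<nu> B)))"

definition entails :: "logic \<Rightarrow> form set \<Rightarrow> form \<Rightarrow> bool" where
  "entails L \<Gamma> A = (\<forall>\<nu>. valuation L \<nu> \<longrightarrow> (\<exists>A'\<in>\<Gamma>. \<nu> A' = f) \<or> \<nu> A \<in> {t, b})"

fun ceval :: "(nat \<Rightarrow> bool) \<Rightarrow> form \<Rightarrow> bool" where
  "ceval s (Var n) = s n"
| "ceval s Bot = False"
| "ceval s (Neg A) = (\<not> ceval s A)"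
| "ceval s (Conj A B) = (ceval s A \<and> ceval s B)"
| "ceval s (Disj A B) = (ceval s A \<or> ceval s B)"
| "ceval s (Imp A B) = (ceval s A \<longrightarrow> ceval s B)"

definition cpl_entails :: "form set \<Rightarrow> form \<Rightarrow> bool" where
  "cpl_entails \<Gamma> A = (\<forall>s. (\<forall>A'\<in>\<Gamma>. ceval s A') \<longrightarrow> ceval s A)"

definition paraconsistent :: "logic \<Rightarrow> bool" where
  "paraconsistent L = (\<exists>A B. \<not> entails L {A, Neg A} B)"

definition prop_a :: "logic \<Rightarrow> bool" where
  "prop_a L = (\<forall>\<Gamma> A. entails L \<Gamma> A \<longrightarrow> cpl_entails \<Gamma> A)"

definition prop_b :: "logic \<Rightarrow> bool" where
  "prop_b L = (\<forall>\<Gamma> A B C.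
     (entails L (\<Gamma> \<union> {A}) B = entails L \<Gamma> (Imp A B)) \<and>
     (entails L \<Gamma> (Conj A B) = (entails L \<Gamma> A \<and> entails L \<Gamma> B)) \<and>
     (entails L (\<Gamma> \<union> {Disj A B}) C = (entails L (\<Gamma> \<union> {A}) C \<and> entails L (\<Gamma> \<union> {B}) C)))"

definition lequiv :: "logic \<Rightarrow> form \<Rightarrow> form \<Rightarrow> bool" where
  "lequiv L A B = (\<forall>\<nu>. valuation L \<nu> \<longrightarrow> \<nu> A = \<nu> B)"

definition laws :: "logic \<Rightarrow> bool" where
  "laws L = (\<forall>A B.
     lequiv L (Conj A Bot) Bot \<and>
     lequiv L (Disj A Top) Top \<and>
     lequiv L (Conj A Top) A \<and>
     lequiv L (Disj A Bot) A \<and>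
     lequiv L (Conj A A) A \<and>
     lequiv L (Disj A A) A \<and>
     lequiv L (Conj A B) (Conj B A) \<and>
     lequiv L (Disj A B) (Disj B A) \<and>
     lequiv L (Neg (Neg A)) A)"

end

theory Submission
  imports Defs
begin

text \<open>
  Evaluating the laws (1)--(9) at two variables pins down negation, conjunction and disjunction
  on all of \<open>V\<close>: they must be the tables of Priest's LP. The deduction theorem (b1) forces
  \<open>x \<rightarrow> y\<close> to be designated whenever \<open>y\<close> is designated or \<open>x = f\<close>, and forces \<open>b \<rightarrow> f = f\<close>
  (modus ponens); together with the classical entries this leaves exactly four entries of the
  implication table free, each in \<open>{t, b}\<close>. Conversely every such choice works: (b) holds
  because each connective commutes with being designated, (a) because classical valuations are
  closed under classical truth functions, and paraconsistency because \<open>\<not>b = b\<close>.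
\<close>

fun eval :: "logic \<Rightarrow> (nat \<Rightarrow> V) \<Rightarrow> form \<Rightarrow> V" where
  "eval L v (Var n) = v n"
| "eval L v Bot = f"
| "eval (ng, cj, dj, im) v (Neg A) = ng (eval (ng, cj, dj, im) v A)"
| "eval (ng, cj, dj, im) v (Conj A B) = cj (eval (ng, cj, dj, im) v A) (eval (ng, cj, dj, im) v B)"
| "eval (ng, cj, dj, im) v (Disj A B) = dj (eval (ng, cj, dj, im) v A) (eval (ng, cj, dj, im) v B)"
| "eval (ng, cj, dj, im) v (Imp A B) = im (eval (ng, cj, dj, im) v A) (eval (ng, cj, dj, im) v B)"

lemma valuation_eval: "valuation L (eval L v)"
  by (cases L) (simp add: valuation_def)

lemma valuation_simps:
  assumes "valuation (ng, cj, dj, im) \<nu>"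
  shows "\<nu> Bot = f" "\<nu> (Neg A) = ng (\<nu> A)" "\<nu> (Conj A B) = cj (\<nu> A) (\<nu> B)"
    "\<nu> (Disj A B) = dj (\<nu> A) (\<nu> B)" "\<nu> (Imp A B) = im (\<nu> A) (\<nu> B)"
  using assms by (simp_all add: valuation_def)

lemma designated_iff: "x \<in> {t, b} \<longleftrightarrow> x \<noteq> f"
  by (cases x) auto

lemma entails_iff_nonfalse:
  "entails L \<Gamma> A \<longleftrightarrow> (\<forall>\<nu>. valuation L \<nu> \<longrightarrow> (\<forall>A'\<in>\<Gamma>. \<nu> A' \<noteq> f) \<longrightarrow> \<nu> A \<noteq> f)"
  unfolding entails_def designated_iff by blast

lemma laws_truth_tables:
  assumes "laws (ng, cj, dj, im)"
  shows "cj x f = f" "dj x (ng f) = ng f" "cj x (ng f) = x" "dj x f = x"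
    "cj x x = x" "dj x x = x" "cj x y = cj y x" "dj x y = dj y x" "ng (ng x) = x"
proof -
  let ?v = "\<lambda>n::nat. if n = 0 then x else y"
  have eq: "lequiv (ng, cj, dj, im) A B \<Longrightarrow> eval (ng, cj, dj, im) ?v A = eval (ng, cj, dj, im) ?v B" for A B
    using valuation_eval unfolding lequiv_def by blast
  from assms[unfolded laws_def, rule_format, of "Var 0" "Var 1"]
  show "cj x f = f" "dj x (ng f) = ng f" "cj x (ng f) = x" "dj x f = x"
    "cj x x = x" "dj x x = x" "cj x y = cj y x" "dj x y = dj y x" "ng (ng x) = x"
    by (auto dest!: eq simp: Top_def)
qed

definition lp_neg :: "V \<Rightarrow> V" where
  "lp_neg x = (case x of t \<Rightarrow> f | f \<Rightarrow> t | b \<Rightarrow> b)"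

definition lp_conj :: "V \<Rightarrow> V \<Rightarrow> V" where
  "lp_conj x y = (if x = f \<or> y = f then f else if x = b \<or> y = b then b else t)"

definition lp_disj :: "V \<Rightarrow> V \<Rightarrow> V" where
  "lp_disj x y = (if x = t \<or> y = t then t else if x = b \<or> y = b then b else f)"

text \<open>The parameters are the values at \<open>(f, b)\<close>, \<open>(t, b)\<close>, \<open>(b, t)\<close>, \<open>(b, b)\<close>; every other entry is forced.\<close>

definition lp_imp :: "V \<Rightarrow> V \<Rightarrow> V \<Rightarrow> V \<Rightarrow> V \<Rightarrow> V \<Rightarrow> V" where
  "lp_imp p q r s x y = (case x of
      f \<Rightarrow> (case y of b \<Rightarrow> p | _ \<Rightarrow> t)
    | t \<Rightarrow> (case y of t \<Rightarrow> t | f \<Rightarrow> f | b \<Rightarrow> q)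
    | b \<Rightarrow> (case y of t \<Rightarrow> r | f \<Rightarrow> f | b \<Rightarrow> s))"

fun lp_logic :: "V \<times> V \<times> V \<times> V \<Rightarrow> logic" where
  "lp_logic (p, q, r, s) = (lp_neg, lp_conj, lp_disj, lp_imp p q r s)"

lemma lp_conj_nonfalse_iff: "lp_conj x y \<noteq> f \<longleftrightarrow> x \<noteq> f \<and> y \<noteq> f"
  by (simp add: lp_conj_def)

lemma lp_disj_nonfalse_iff: "lp_disj x y \<noteq> f \<longleftrightarrow> x \<noteq> f \<or> y \<noteq> f"
  by (cases x; cases y) (simp_all add: lp_disj_def)

lemma lp_imp_nonfalse_iff:
  assumes "p \<noteq> f" "q \<noteq> f" "r \<noteq> f" "s \<noteq> f"
  shows "lp_imp p q r s x y \<noteq> f \<longleftrightarrow> (x \<noteq> f \<longrightarrow> y \<noteq> f)"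
  using assms by (cases x; cases y) (simp_all add: lp_imp_def)

lemma classical_agree_lp_logic: "classical_agree (lp_logic P)"
  by (cases P) (simp add: classical_agree_def lp_neg_def lp_conj_def lp_disj_def lp_imp_def)

lemma inj_lp_logic: "inj lp_logic"
proof (rule injI, clarsimp)
  fix p q r s p' q' r' s'
  assume "lp_imp p q r s = lp_imp p' q' r' s'"
  then have "lp_imp p q r s x y = lp_imp p' q' r' s' x y" for x y
    by simp
  from this[of f b] this[of t b] this[of b t] this[of b b]
  show "p = p' \<and> q = q' \<and> r = r' \<and> s = s'"
    by (simp add: lp_imp_def)
qed

lemma lp_connectives_if_laws:
  assumes ca: "classical_agree (ng, cj, dj, im)" and lw: "laws (ng, cj, dj, im)"
  shows "ng = lp_neg" "cj = lp_conj" "dj = lp_disj"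
proof -
  note tt = laws_truth_tables[OF lw]
  from ca have ng: "ng t = f" "ng f = t"
    by (simp_all add: classical_agree_def)
  have "ng b = b"
    using tt(9)[of b] ng by (cases "ng b") auto
  with ng show "ng = lp_neg"
    by (auto simp: lp_neg_def split: V.split)
  show "cj = lp_conj"
  proof (intro ext)
    fix x y show "cj x y = lp_conj x y"
      using tt(1,3,5,7) ng by (cases x; cases y) (auto simp: lp_conj_def)
  qed
  show "dj = lp_disj"
  proof (intro ext)
    fix x y show "dj x y = lp_disj x y"
      using tt(2,4,6,8) ng by (cases x; cases y) (auto simp: lp_disj_def)
  qed
qed

lemma imp_values_if_deduction_theorem:
  assumes dt: "\<And>\<Gamma> A B. entails (ng, cj, dj, im) (\<Gamma> \<union> {A}) B =
                         entails (ng, cj, dj, im) \<Gamma> (Imp A B)"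
  shows "y \<noteq> f \<Longrightarrow> im x y \<noteq> f" and "im f y \<noteq> f" and "im b f = f"
proof -
  let ?v = "\<lambda>n::nat. if n = 0 then x else y"
  have "entails (ng, cj, dj, im) ({Var 1} \<union> {Var 0}) (Var 1)"
    by (simp add: entails_iff_nonfalse)
  then have "entails (ng, cj, dj, im) {Var 1} (Imp (Var 0) (Var 1))"
    using dt by blast
  then show "y \<noteq> f \<Longrightarrow> im x y \<noteq> f"
    using valuation_eval[of "(ng, cj, dj, im)" ?v] by (auto simp: entails_iff_nonfalse)
  have "entails (ng, cj, dj, im) ({} \<union> {Bot}) (Var 1)"
    by (simp add: entails_iff_nonfalse valuation_def)
  then have "entails (ng, cj, dj, im) {} (Imp Bot (Var 1))"
    using dt by blast
  then show "im f y \<noteq> f"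
    using valuation_eval[of "(ng, cj, dj, im)" "\<lambda>_. y"] by (auto simp: entails_iff_nonfalse)
  have "entails (ng, cj, dj, im) {Imp (Var 0) (Var 1)} (Imp (Var 0) (Var 1))"
    by (simp add: entails_iff_nonfalse)
  then have "entails (ng, cj, dj, im) ({Imp (Var 0) (Var 1)} \<union> {Var 0}) (Var 1)"
    using dt by blast
  then show "im b f = f"
    using valuation_eval[of "(ng, cj, dj, im)" "\<lambda>n::nat. if n = 0 then b else f"]
    by (auto simp: entails_iff_nonfalse)
qed

lemma imp_eq_lp_imp:
  assumes "classical_agree (ng, cj, dj, im)" and "im b f = f"
  shows "im = lp_imp (im f b) (im t b) (im b t) (im b b)"
proof (intro ext)
  fix x y show "im x y = lp_imp (im f b) (im t b) (im b t) (im b b) x y"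
    using assms by (cases x; cases y) (simp_all add: classical_agree_def lp_imp_def)
qed

lemma classical_eval:
  assumes "classical_agree (ng, cj, dj, im)"
  shows "eval (ng, cj, dj, im) (\<lambda>n. if s n then t else f) A = (if ceval s A then t else f)"
  using assms by (induction A) (auto simp: classical_agree_def)

lemma prop_a_if_classical_agree:
  assumes "classical_agree (ng, cj, dj, im)"
  shows "prop_a (ng, cj, dj, im)"
  unfolding prop_a_def cpl_entails_def
proof (intro allI impI)
  fix \<Gamma> A s
  assume "entails (ng, cj, dj, im) \<Gamma> A" and "\<forall>A'\<in>\<Gamma>. ceval s A'"
  moreover have "valuation (ng, cj, dj, im) (\<lambda>A. if ceval s A then t else f)"
    using valuation_eval[of "(ng, cj, dj, im)" "\<lambda>n. if s n then t else f"]
    unfolding classical_eval[OF assms] .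
  ultimately show "ceval s A"
    unfolding entails_def by (auto split: if_splits)
qed

lemma paraconsistent_if_neg_fixes_b:
  assumes "ng b = b"
  shows "paraconsistent (ng, cj, dj, im)"
  unfolding paraconsistent_def
proof (intro exI)
  show "\<not> entails (ng, cj, dj, im) {Var 0, Neg (Var 0)} Bot"
    using assms valuation_eval[of "(ng, cj, dj, im)" "\<lambda>_. b"] by (auto simp: entails_def)
qed

lemma prop_b_if_connectives_preserve_designation:
  assumes "\<And>x y. cj x y \<noteq> f \<longleftrightarrow> x \<noteq> f \<and> y \<noteq> f"
    and "\<And>x y. dj x y \<noteq> f \<longleftrightarrow> x \<noteq> f \<or> y \<noteq> f"
    and "\<And>x y. im x y \<noteq> f \<longleftrightarrow> (x \<noteq> f \<longrightarrow> y \<noteq> f)"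
  shows "prop_b (ng, cj, dj, im)"
proof -
  have conj: "\<nu> (Conj A B) \<noteq> f \<longleftrightarrow> \<nu> A \<noteq> f \<and> \<nu> B \<noteq> f"
    and disj: "\<nu> (Disj A B) \<noteq> f \<longleftrightarrow> \<nu> A \<noteq> f \<or> \<nu> B \<noteq> f"
    and imp: "\<nu> (Imp A B) \<noteq> f \<longleftrightarrow> (\<nu> A \<noteq> f \<longrightarrow> \<nu> B \<noteq> f)"
    if "valuation (ng, cj, dj, im) \<nu>" for \<nu> A B
    using assms valuation_simps[OF that] by simp_all
  show ?thesis
    unfolding prop_b_def entails_iff_nonfalse
  proof (intro allI conjI)
    fix \<Gamma> A B C
    show "(\<forall>\<nu>. valuation (ng, cj, dj, im) \<nu> \<longrightarrow> (\<forall>A'\<in>\<Gamma> \<union> {A}. \<nu> A' \<noteq> f) \<longrightarrow> \<nu> B \<noteq> f) =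
          (\<forall>\<nu>. valuation (ng, cj, dj, im) \<nu> \<longrightarrow> (\<forall>A'\<in>\<Gamma>. \<nu> A' \<noteq> f) \<longrightarrow> \<nu> (Imp A B) \<noteq> f)"
      using imp by auto
    show "(\<forall>\<nu>. valuation (ng, cj, dj, im) \<nu> \<longrightarrow> (\<forall>A'\<in>\<Gamma>. \<nu> A' \<noteq> f) \<longrightarrow> \<nu> (Conj A B) \<noteq> f) =
          ((\<forall>\<nu>. valuation (ng, cj, dj, im) \<nu> \<longrightarrow> (\<forall>A'\<in>\<Gamma>. \<nu> A' \<noteq> f) \<longrightarrow> \<nu> A \<noteq> f) \<and>
           (\<forall>\<nu>. valuation (ng, cj, dj, im) \<nu> \<longrightarrow> (\<forall>A'\<in>\<Gamma>. \<nu> A' \<noteq> f) \<longrightarrow> \<nu> B \<noteq> f))"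
      using conj by auto
    show "(\<forall>\<nu>. valuation (ng, cj, dj, im) \<nu> \<longrightarrow> (\<forall>A'\<in>\<Gamma> \<union> {Disj A B}. \<nu> A' \<noteq> f) \<longrightarrow> \<nu> C \<noteq> f) =
          ((\<forall>\<nu>. valuation (ng, cj, dj, im) \<nu> \<longrightarrow> (\<forall>A'\<in>\<Gamma> \<union> {A}. \<nu> A' \<noteq> f) \<longrightarrow> \<nu> C \<noteq> f) \<and>
           (\<forall>\<nu>. valuation (ng, cj, dj, im) \<nu> \<longrightarrow> (\<forall>A'\<in>\<Gamma> \<union> {B}. \<nu> A' \<noteq> f) \<longrightarrow> \<nu> C \<noteq> f))"
      using disj by auto
  qed
qed

lemma laws_lp:
  "laws (lp_neg, lp_conj, lp_disj, im)"
  unfolding laws_def lequiv_def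
proof (intro allI conjI impI)
  fix A B \<nu> assume "valuation (lp_neg, lp_conj, lp_disj, im) \<nu>"
  note val = valuation_simps[OF this]
  show "\<nu> (Conj A Bot) = \<nu> Bot" "\<nu> (Disj A Top) = \<nu> Top" "\<nu> (Conj A Top) = \<nu> A"
    "\<nu> (Disj A Bot) = \<nu> A" "\<nu> (Conj A A) = \<nu> A" "\<nu> (Disj A A) = \<nu> A"
    "\<nu> (Conj A B) = \<nu> (Conj B A)" "\<nu> (Disj A B) = \<nu> (Disj B A)" "\<nu> (Neg (Neg A)) = \<nu> A"
    by (cases "\<nu> A"; cases "\<nu> B"; simp add: val Top_def lp_neg_def lp_conj_def lp_disj_def)+
qed

lemma admissible_logics_eq_lp_logics:
  "{L :: logic. classical_agree L \<and> paraconsistent L \<and> prop_a L \<and> prop_b L \<and> laws L}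
     = lp_logic ` ({t, b} \<times> {t, b} \<times> {t, b} \<times> {t, b})" (is "?S = ?T")
proof (intro equalityI subsetI)
  fix L assume "L \<in> ?S"
  moreover obtain ng cj dj im where L: "L = (ng, cj, dj, im)"
    by (cases L) auto
  ultimately have ca: "classical_agree (ng, cj, dj, im)"
    and pb: "prop_b (ng, cj, dj, im)" and lw: "laws (ng, cj, dj, im)"
    by auto
  from pb have "entails (ng, cj, dj, im) (\<Gamma> \<union> {A}) B = entails (ng, cj, dj, im) \<Gamma> (Imp A B)"
    for \<Gamma> A B
    by (simp add: prop_b_def)
  note im = imp_values_if_deduction_theorem[OF this]
  have "L = lp_logic (im f b, im t b, im b t, im b b)"
    unfolding L by (simp add: lp_connectives_if_laws[OF ca lw]) (rule imp_eq_lp_imp[OF ca im(3)])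
  moreover have "im f b \<in> {t, b}" "im t b \<in> {t, b}" "im b t \<in> {t, b}" "im b b \<in> {t, b}"
    using im(1)[of b] im(2)[of b] im(1)[of t] unfolding designated_iff by simp_all
  ultimately show "L \<in> ?T"
    by (auto intro: image_eqI)
next
  fix L assume "L \<in> ?T"
  then obtain p q r s where "p \<noteq> f" "q \<noteq> f" "r \<noteq> f" "s \<noteq> f"
    and L: "L = (lp_neg, lp_conj, lp_disj, lp_imp p q r s)"
    by auto
  then have "prop_b L"
    unfolding L
    by (intro prop_b_if_connectives_preserve_designation
        lp_conj_nonfalse_iff lp_disj_nonfalse_iff lp_imp_nonfalse_iff)
  moreover have "classical_agree L"
    using classical_agree_lp_logic[of "(p, q, r, s)"] L by simp
  ultimately show "L \<in> ?S"
    using L paraconsistent_if_neg_fixes_b prop_a_if_classical_agree laws_lp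
    by (simp add: lp_neg_def)
qed

theorem corollary1:
  shows "card {L :: logic. classical_agree L \<and> paraconsistent L \<and> prop_a L \<and> prop_b L \<and> laws L} = 16"
proof -
  have "card {L :: logic. classical_agree L \<and> paraconsistent L \<and> prop_a L \<and> prop_b L \<and> laws L}
      = card ({t, b} \<times> {t, b} \<times> {t, b} \<times> ({t, b} :: V set))"
    unfolding admissible_logics_eq_lp_logics
    by (rule card_image) (rule inj_on_subset[OF inj_lp_logic subset_UNIV])
  also have "\<dots> = 16"
    by (simp add: card_cartesian_product)
  finally show ?thesis .
qed

end
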